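(* The number of components of the closure $\widehat{\mathbb{L}}(p_1,q_1;\dots;p_r,q_r)$ of a Lorenz braid equals the multiplicity of $1$ as an eigenvalue (root of the characteristic polynomial) of the $(P_r+Q_r)\times(P_r+Q_r)$ permutation matrix $M$ defined as follows: index the rows by consecutive blocks of sizes $q_1,\dots,q_r,p_1,\dots,p_r$ and the columns by consecutive blocks of sizes $p_1,q_1,p_2,q_2,\dots,p_r,q_r$; for each $i$, the block of $M$ in row block $q_i$ and column block $q_i$ is $I_{q_i}$, the block in row block $p_i$ and column block $p_i$ is $I_{p_i}$, and all other blocks are zero. (This matrix $M$ equals $\lim_{t\to1}\beta_{P_r+Q_r}(\mathbb{L}(p_1,q_1;\dots;p_r,q_r))$.)
   Context: Lorenz braid: given $r\ge1$ and positive integers $p_1,q_1,\dots,p_r,q_r$, set $P_j=p_1+\cdots+p_j$, $Q_j=q_1+\cdots+q_j$. $\mathbb{L}(p_1,q_1;\dots;p_r,q_r)$ is the braid on $P_r+Q_r$ strands defined by: the top row is split into a left part of $Q_r$ points and a right part of $P_r$ points; the bottom row is split, from left to right, into consecutive parts of sizes $p_1,q_1,\dots,p_r,q_r$; the strands from the left top part are joined in order to the points of the parts of sizes $q_1,\dots,q_r$, and the strands from the right top part are joined in order to the points of the parts of sizes $p_1,\dots,p_r$; at each crossing the strand from the left top part passes over. Its closure (joining the $i$-th top point to the $i$-th bottom point for each $i$) is a Lorenz link. $\beta_n$ denotes the Burau representation $B_n\to\mathrm{GL}_n(\mathbb{Z}[t,t^{-1}])$, $\beta_n(\sigma_j)=I_{j-1}\oplus\begin{pmatrix}1-t&t\\1&0\end{pmatrix}\oplus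 I_{n-j-1}$. *)

theory Defs
  imports "HOL-Computational_Algebra.Polynomial" "Jordan_Normal_Form.Char_Poly"
begin

(* Parameters p_1,q_1,...,p_r,q_r are given as lists ps, qs of length r (0-indexed).
   psum xs j = x_1 + ... + x_j, so P_j = psum ps j, Q_j = psum qs j. *)
definition psum :: "nat list \<Rightarrow> nat \<Rightarrow> nat" where
  "psum xs j = sum_list (take j xs)"

definition lorenz_params_ok :: "nat list \<Rightarrow> nat list \<Rightarrow> bool" where
  "lorenz_params_ok ps qs \<longleftrightarrow> length ps = length qs \<and> length ps \<ge> 1
     \<and> (\<forall>x\<in>set ps. x > 0) \<and> (\<forall>x\<in>set qs. x > 0)"

definition lorenz_strands :: "nat list \<Rightarrow> nat list \<Rightarrow> nat" where
  "lorenz_strands ps qs = sum_list ps + sum_list qs"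

(* Strand endpoints of the Lorenz braid L(p_1,q_1;...;p_r,q_r) (positions 0-indexed):
   lorenz_end ps qs a = bottom position of the strand starting at top position a.
   Top: left part = positions 0..Q_r-1, right part = Q_r..Q_r+P_r-1.
   Bottom blocks from left: p_1,q_1,...,p_r,q_r; block p_{i+1} starts at P_i+Q_i,
   block q_{i+1} starts at P_{i+1}+Q_i.  The k-th left strand goes (in order) to the
   k-th point of the union of q-blocks, the k-th right strand to the k-th point of
   the union of p-blocks. *)
definition lorenz_end :: "nat list \<Rightarrow> nat list \<Rightarrow> nat \<Rightarrow> nat" where
  "lorenz_end ps qs a =
     (let r = length ps; Q = psum qs; P = psum ps in
      if a < Q r then
        (let i = (THE i. i < r \<and> Q i \<le> a \<and> a < Q (Suc i)) in P (Suc i) + a)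
      else
        (let k = a - Q r; i = (THE i. i < r \<and> P i \<le> k \<and> k < P (Suc i)) in Q i + k))"

(* Components of the closure: the closure joins bottom point j to top point j, so
   the strand starting at top a continues with the strand starting at top
   (lorenz_end a). *)
definition closure_components :: "nat \<Rightarrow> (nat \<Rightarrow> nat) \<Rightarrow> nat" where
  "closure_components n \<pi> =
     (let R = {(a, \<pi> a) | a. a < n} in card ({0..<n} // ((R \<union> R\<inverse>)\<^sup>*)))"

definition lorenz_link_components :: "nat list \<Rightarrow> nat list \<Rightarrow> nat" where
  "lorenz_link_components ps qs =
     closure_components (lorenz_strands ps qs) (lorenz_end ps qs)"

definition lorenz_M :: "nat list \<Rightarrow> nat list \<Rightarrow> int mat" where
  "lorenz_M ps qs =
     (let r = length ps; Q = psum qs; P = psum ps; n = lorenz_strands ps qs in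
      mat n n (\<lambda>(a, b).
        if (\<exists>i<r. \<exists>k. (k < qs ! i \<and> a = Q i + k \<and> b = P (Suc i) + Q i + k)
                   \<or> (k < ps ! i \<and> a = Q r + P i + k \<and> b = P i + Q i + k))
        then 1 else 0))"

end

(*
  The braid permutes its strands, lorenz_M is the matrix of this permutation, and the
  components of the closure are the cycles of the permutation.  The characteristic polynomial
  of a permutation matrix is the product of X^l - 1 over its cycles, l the cycle length, and
  each factor has a simple root at 1.  This is proved by induction on the number of points for
  the weighted matrix diag (X^(k i)) - P: a fixed point n splits off the factor X^(k n) - 1;
  otherwise n is removed from its cycle and its weight is added to that of its predecessor,
  which changes neither the determinant nor the number of cycles.
*)
theory Submission
  imports Defs "HOL-Combinatorics.Transposition"
begin

lemma card_quotient_restrict: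
  assumes E: "equiv UNIV E"
    and meets: "\<And>x. x \<in> A \<Longrightarrow> \<exists>y\<in>B. (x, y) \<in> E"
    and restr: "\<And>x. x \<in> B \<Longrightarrow> F `` {x} = E `` {x} \<inter> B"
    and "B \<subseteq> A"
  shows "card (B // F) = card (A // E)"
proof -
  have "A // E = (\<lambda>y. E `` {y}) ` B"
  proof -
    have "E `` {x} \<in> (\<lambda>y. E `` {y}) ` B" if "x \<in> A" for x
      using meets[OF that] equiv_class_eq[OF E] by blast
    then show ?thesis using \<open>B \<subseteq> A\<close> by (auto simp: quotient_def)
  qed
  then have image: "B // F = (\<lambda>C. C \<inter> B) ` (A // E)"
    by (auto simp: quotient_def restr image_image)
  have "inj_on (\<lambda>C. C \<inter> B) (A // E)"
  proof (rule inj_onI)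
    fix C D assume C: "C \<in> A // E" and D: "D \<in> A // E" and eq: "C \<inter> B = D \<inter> B"
    obtain x where "x \<in> A" "C = E `` {x}" using C by (auto elim: quotientE)
    with meets obtain y where "y \<in> C \<inter> B" by blast
    then have "C \<inter> D \<noteq> {}" using eq by blast
    moreover have "C \<in> UNIV // E" "D \<in> UNIV // E"
      using C D by (auto simp: quotient_def)
    ultimately show "C = D" using quotient_disj[OF E] by blast
  qed
  then show ?thesis unfolding image by (rule card_image)
qed

definition closure_rel :: "nat \<Rightarrow> (nat \<Rightarrow> nat) \<Rightarrow> nat rel" where
  "closure_rel n \<pi> = (let R = {(a, \<pi> a) | a. a < n} in (R \<union> R\<inverse>)\<^sup>*)"

lemma closure_components_eq_card_quotient:
  "closure_components n \<pi> = card ({0..<n} // closure_rel n \<pi>)"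
  by (simp add: closure_components_def closure_rel_def Let_def)

lemma equiv_closure_rel: "equiv UNIV (closure_rel n \<pi>)"
  unfolding closure_rel_def Let_def
  by (simp add: equiv_def refl_rtrancl sym_rtrancl sym_Un_converse trans_rtrancl)

lemma closure_rel_refl: "(x, x) \<in> closure_rel n \<pi>"
  unfolding closure_rel_def Let_def by simp

lemma closure_rel_sym: "(x, y) \<in> closure_rel n \<pi> \<Longrightarrow> (y, x) \<in> closure_rel n \<pi>"
  using equiv_closure_rel by (meson equiv_def symD)

lemma closure_rel_trans:
  "(x, y) \<in> closure_rel n \<pi> \<Longrightarrow> (y, z) \<in> closure_rel n \<pi> \<Longrightarrow> (x, z) \<in> closure_rel n \<pi>"
  unfolding closure_rel_def Let_def by (rule rtrancl_trans)

lemma closure_rel_edge: "a < n \<Longrightarrow> (a, \<pi> a) \<in> closure_rel n \<pi>"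
  unfolding closure_rel_def Let_def by blast

lemma closure_rel_least:
  assumes E: "equiv UNIV E" and edges: "\<And>x. x < n \<Longrightarrow> (x, \<pi> x) \<in> E"
  shows "closure_rel n \<pi> \<subseteq> E"
proof (rule subrelI)
  fix x y assume "(x, y) \<in> closure_rel n \<pi>"
  then show "(x, y) \<in> E"
    unfolding closure_rel_def Let_def
  proof (induction rule: rtrancl_induct)
    case base
    show ?case using E by (simp add: equiv_def refl_on_def)
  next
    case (step y z)
    then have "(y, z) \<in> E" using edges sym_def[of E] E by (auto simp: equiv_def)
    with step.IH show ?case using E by (meson equiv_def transD)
  qed
qed

lemma closure_rel_eq_or_less:
  assumes "\<forall>i<n. \<pi> i < n" and "(x, y) \<in> closure_rel n \<pi>"
  shows "x = y \<or> x < n \<and> y < n"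
  using assms(2) unfolding closure_rel_def Let_def
  by (induction rule: rtrancl_induct) (use assms(1) in auto)

lemma closure_components_fixpoint:
  assumes into: "\<forall>i<n. \<pi> i < n" and fixed: "\<pi> n = n"
  shows "closure_components (Suc n) \<pi> = Suc (closure_components n \<pi>)"
proof -
  let ?E = "closure_rel n \<pi>"
  have edges: "{(a, \<pi> a) | a. a < Suc n} = insert (n, n) {(a, \<pi> a) | a. a < n}"
    using fixed by (auto simp: less_Suc_eq)
  have "(insert (n, n) R \<union> (insert (n, n) R)\<inverse>)\<^sup>* = (R \<union> R\<inverse>)\<^sup>*" for R :: "nat rel"
  proof -
    have "insert (n, n) R \<union> (insert (n, n) R)\<inverse> = insert (n, n) (R \<union> R\<inverse>)" by auto
    then show ?thesis by (simp add: r_into_rtrancl rtrancl_subset subsetI)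
  qed
  then have same: "closure_rel (Suc n) \<pi> = ?E"
    unfolding closure_rel_def Let_def edges .
  have singleton: "?E `` {n} = {n}"
    using closure_rel_eq_or_less[OF into] equiv_class_self[OF equiv_closure_rel] by blast
  have "{n} \<notin> {0..<n} // ?E"
  proof
    assume "{n} \<in> {0..<n} // ?E"
    then obtain x where "x < n" "{n} = ?E `` {x}" by (auto elim: quotientE)
    then show False using closure_rel_refl[of x n \<pi>] by auto
  qed
  moreover have "finite ({0..<n} // ?E)"
    by (simp add: quotient_def)
  moreover have "{0..<Suc n} // ?E = insert {n} ({0..<n} // ?E)"
    using singleton by (auto simp: quotient_def atLeastLessThanSuc)
  ultimately show ?thesis
    by (simp add: closure_components_eq_card_quotient same)
qed

lemma bij_betw_lessThan_fixpoint:
  assumes "bij_betw f {..<Suc n} {..<Suc n}" and "f n = n"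
  shows "bij_betw f {..<n} {..<n}"
  using bij_betw_DiffI[OF assms(1), of "{n}" "{n}"] assms(2) by (simp add: lessThan_Suc)

lemma bij_betw_bypass:
  assumes bij: "bij_betw \<pi> {..<Suc n} {..<Suc n}" and a: "a < n" "\<pi> a = n"
  shows "bij_betw (\<pi>(a := \<pi> n)) {..<n} {..<n}"
proof -
  have "bij_betw (\<pi> \<circ> transpose a n) {..<Suc n} {..<Suc n}"
    using a by (intro bij_betw_trans[OF _ bij]) simp
  then have "bij_betw (\<pi> \<circ> transpose a n) {..<n} {..<n}"
    by (rule bij_betw_lessThan_fixpoint) (simp add: a)
  moreover have "(\<pi> \<circ> transpose a n) x = (\<pi>(a := \<pi> n)) x" if "x \<in> {..<n}" for x
    using that by (simp add: transpose_def)
  ultimately show ?thesis by (metis bij_betw_cong)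
qed

text \<open>Contracting \<open>n\<close> onto its predecessor \<open>a\<close> maps the edges of \<open>\<pi>\<close> to edges or loops of the
  bypassed map, so the two relations agree on \<open>{..<n}\<close>.\<close>

lemma closure_rel_bypass:
  assumes bij: "bij_betw \<pi> {..<Suc n} {..<Suc n}" and a: "a < n" "\<pi> a = n"
    and "x < n" "y < n"
  shows "(x, y) \<in> closure_rel n (\<pi>(a := \<pi> n)) \<longleftrightarrow> (x, y) \<in> closure_rel (Suc n) \<pi>"
proof
  let ?p = "\<pi>(a := \<pi> n)"
  have only_a: "\<pi> i \<noteq> n" if "i < Suc n" "i \<noteq> a" for i
    using a that inj_on_eq_iff[OF bij_betw_imp_inj_on[OF bij], of i a] by simp
  show "(x, y) \<in> closure_rel (Suc n) \<pi>" if "(x, y) \<in> closure_rel n ?p"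
  proof -
    have "(i, ?p i) \<in> closure_rel (Suc n) \<pi>" if "i < n" for i
    proof (cases "i = a")
      case True
      have "(a, n) \<in> closure_rel (Suc n) \<pi>" "(n, \<pi> n) \<in> closure_rel (Suc n) \<pi>"
        using closure_rel_edge[of _ "Suc n" \<pi>] a by auto
      then have "(a, \<pi> n) \<in> closure_rel (Suc n) \<pi>" by (rule closure_rel_trans)
      with True show ?thesis by simp
    next
      case False
      then show ?thesis using that closure_rel_edge[of i "Suc n" \<pi>] by simp
    qed
    then have "closure_rel n ?p \<subseteq> closure_rel (Suc n) \<pi>"
      by (rule closure_rel_least[OF equiv_closure_rel])
    with that show ?thesis by blast
  qed
  show "(x, y) \<in> closure_rel n ?p" if "(x, y) \<in> closure_rel (Suc n) \<pi>"
  proof -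
    define c where "c i = (if i = n then a else i)" for i
    have "sym (closure_rel n ?p)" "trans (closure_rel n ?p)"
      using equiv_closure_rel by (auto elim: equivE)
    then have "equiv UNIV (inv_image (closure_rel n ?p) c)"
      by (simp add: equiv_def sym_inv_image trans_inv_image refl_on_def closure_rel_refl)
    moreover have "(c i, c (\<pi> i)) \<in> closure_rel n ?p" if "i < Suc n" for i
    proof (cases "i = n")
      case True
      have "\<pi> n \<noteq> n" using only_a[of n] a by simp
      then show ?thesis using True closure_rel_edge[of a n ?p] a by (simp add: c_def)
    next
      case False
      then have "i < n" using that by simp
      show ?thesis
      proof (cases "i = a")
        case True
        then show ?thesis using a by (simp add: c_def closure_rel_refl)
      next
        case False
        then have "\<pi> i \<noteq> n" using only_a \<open>i < n\<close> by simp
        then show ?thesis using False \<open>i < n\<close> closure_rel_edge[of i n ?p] by (simp add: c_def)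
      qed
    qed
    ultimately have "closure_rel (Suc n) \<pi> \<subseteq> inv_image (closure_rel n ?p) c"
      by (intro closure_rel_least) auto
    with that show ?thesis using \<open>x < n\<close> \<open>y < n\<close> by (auto simp: c_def)
  qed
qed

lemma closure_components_bypass:
  assumes bij: "bij_betw \<pi> {..<Suc n} {..<Suc n}" and a: "a < n" "\<pi> a = n"
  shows "closure_components (Suc n) \<pi> = closure_components n (\<pi>(a := \<pi> n))"
proof -
  let ?E = "closure_rel (Suc n) \<pi>" and ?F = "closure_rel n (\<pi>(a := \<pi> n))"
  have into: "\<forall>i<n. (\<pi>(a := \<pi> n)) i < n"
    using bij_betw_bypass[OF bij a] by (auto dest: bij_betw_apply)
  have "card ({0..<n} // ?F) = card ({0..<Suc n} // ?E)"
  proof (rule card_quotient_restrict[OF equiv_closure_rel])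
    show "\<exists>y\<in>{0..<n}. (x, y) \<in> ?E" if "x \<in> {0..<Suc n}" for x
    proof (cases "x = n")
      case True
      then have "(x, a) \<in> ?E" using closure_rel_sym[OF closure_rel_edge[of a "Suc n" \<pi>]] a by simp
      then show ?thesis using a by auto
    next
      case False
      then have "x \<in> {0..<n}" using that by simp
      then show ?thesis using closure_rel_refl by blast
    qed
    show "?F `` {x} = ?E `` {x} \<inter> {0..<n}" if x: "x \<in> {0..<n}" for x
    proof (intro equalityI subsetI)
      fix y assume "y \<in> ?F `` {x}"
      then have xy: "(x, y) \<in> ?F" by simp
      then have "y < n" using closure_rel_eq_or_less[OF into xy] x by auto
      then show "y \<in> ?E `` {x} \<inter> {0..<n}" using x xy closure_rel_bypass[OF bij a] by auto
    next
      fix y assume "y \<in> ?E `` {x} \<inter> {0..<n}"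
      then show "y \<in> ?F `` {x}" using x closure_rel_bypass[OF bij a] by auto
    qed
  qed auto
  then show ?thesis by (simp add: closure_components_eq_card_quotient)
qed

lemma X_power_minus_1_neq_0:
  assumes "k > 0"
  shows "[:0, 1:] ^ k - 1 \<noteq> (0 :: 'a :: comm_ring_1 poly)"
proof
  assume "[:0, 1:] ^ k - 1 = (0 :: 'a poly)"
  then have "poly ([:0, 1:] ^ k - 1) 0 = (0 :: 'a)" by simp
  with assms show False by (simp add: power_0_left)
qed

lemma order_1_X_power_minus_1:
  assumes "k > 0"
  shows "order 1 ([:0, 1:] ^ k - 1 :: 'a :: {idom, ring_char_0} poly) = 1"
proof -
  let ?s = "\<Sum>i<k. [:0, 1:] ^ i :: 'a poly"
  have factor: "[:0, 1:] ^ k - 1 = [:-1, 1:] * ?s"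
    using power_diff_1_eq[of "[:0, 1 :: 'a:]" k] by (simp add: one_pCons)
  have "poly ?s 1 = of_nat k" by (simp add: poly_sum)
  then have "poly ?s 1 \<noteq> 0" using assms by simp
  then have "?s \<noteq> 0" and "order 1 ?s = 0" by (auto intro: order_0I)
  have "[:-1, 1:] * ?s \<noteq> 0" using \<open>?s \<noteq> 0\<close> by (intro no_zero_divisors) auto
  then have "order 1 ([:-1, 1:] * ?s) = order 1 [:-1, 1 :: 'a:] + order 1 ?s"
    by (rule order_mult)
  also have "order 1 [:-1, 1 :: 'a:] = 1" using order_power_n_n[of "1 :: 'a" 1] by simp
  finally show ?thesis unfolding factor using \<open>order 1 ?s = 0\<close> by simp
qed

definition weighted_char_mat :: "nat \<Rightarrow> (nat \<Rightarrow> nat) \<Rightarrow> (nat \<Rightarrow> nat) \<Rightarrow> 'a :: comm_ring_1 poly mat" where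
  "weighted_char_mat n k \<pi> =
     mat n n (\<lambda>(i, j). (if i = j then [:0, 1:] ^ k i else 0) - (if j = \<pi> i then 1 else 0))"

lemma weighted_char_mat_carrier: "weighted_char_mat n k \<pi> \<in> carrier_mat n n"
  by (simp add: weighted_char_mat_def)

lemma dim_weighted_char_mat [simp]:
  "dim_row (weighted_char_mat n k \<pi>) = n" "dim_col (weighted_char_mat n k \<pi>) = n"
  by (simp_all add: weighted_char_mat_def)

lemma weighted_char_mat_index:
  "i < n \<Longrightarrow> j < n \<Longrightarrow> weighted_char_mat n k \<pi> $$ (i, j) =
     (if i = j then [:0, 1:] ^ k i else 0) - (if j = \<pi> i then 1 else 0)"
  by (simp add: weighted_char_mat_def)

lemma mat_delete_weighted_char_mat:
  "mat_delete (weighted_char_mat (Suc n) k \<pi>) n n = weighted_char_mat n k \<pi>"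
  by (rule eq_matI) (auto simp: mat_delete_def weighted_char_mat_def)

lemma det_last_column_single:
  fixes A :: "'a :: comm_ring_1 mat"
  assumes A: "A \<in> carrier_mat (Suc n) (Suc n)" and col: "\<And>i. i < n \<Longrightarrow> A $$ (i, n) = 0"
  shows "det A = A $$ (n, n) * det (mat_delete A n n)"
proof -
  have "det A = (\<Sum>i<Suc n. A $$ (i, n) * cofactor A i n)"
    by (rule laplace_expansion_column[OF A]) simp
  also have "\<dots> = A $$ (n, n) * cofactor A n n"
    using col by simp
  also have "cofactor A n n = det (mat_delete A n n)"
    by (simp add: cofactor_def flip: mult_2)
  finally show ?thesis .
qed

lemma det_weighted_char_mat_fixpoint:
  assumes "\<pi> n = n" and "\<And>i. i < n \<Longrightarrow> \<pi> i \<noteq> n"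
  shows "det (weighted_char_mat (Suc n) k \<pi>) = ([:0, 1:] ^ k n - 1) * det (weighted_char_mat n k \<pi>)"
proof -
  have "det (weighted_char_mat (Suc n) k \<pi>) =
    weighted_char_mat (Suc n) k \<pi> $$ (n, n) * det (mat_delete (weighted_char_mat (Suc n) k \<pi>) n n)"
    by (rule det_last_column_single[OF weighted_char_mat_carrier])
      (use assms in \<open>fastforce simp: weighted_char_mat_index\<close>)
  then show ?thesis using assms by (simp add: weighted_char_mat_index mat_delete_weighted_char_mat)
qed

lemma mat_delete_bypass_row_op:
  assumes a: "a < n" "\<pi> a = n"
  shows "mat_delete
      (addrow 1 a n (multrow a ([:0, 1:] ^ k n) (weighted_char_mat (Suc n) k \<pi>))) n n =
    (weighted_char_mat n (k(a := k a + k n)) (\<pi>(a := \<pi> n)) :: 'a :: comm_ring_1 poly mat)"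
    (is "mat_delete ?B n n = ?W")
proof (rule eq_matI)
  let ?X = "[:0, 1:] ^ k n :: 'a poly"
  let ?A = "weighted_char_mat (Suc n) k \<pi> :: 'a poly mat"
  have A: "?A \<in> carrier_mat (Suc n) (Suc n)" by (rule weighted_char_mat_carrier)
  fix i j assume "i < dim_row ?W" and "j < dim_col ?W"
  then have ij: "i < n" "j < n" by simp_all
  then have "mat_delete ?B n n $$ (i, j) = ?B $$ (i, j)" using A by (simp add: mat_delete_def)
  also have "\<dots> = ?W $$ (i, j)"
  proof (cases "i = a")
    case True
    have "?B $$ (i, j) = ?A $$ (n, j) + ?X * ?A $$ (a, j)"
      using True ij A a by simp
    also have "\<dots> = ?X * (if a = j then [:0, 1:] ^ k a else 0) - (if j = \<pi> n then 1 else 0)"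
      using ij a by (simp add: weighted_char_mat_index)
    also have "\<dots> = (if a = j then [:0, 1:] ^ (k a + k n) else 0) - (if j = \<pi> n then 1 else 0)"
      by (simp add: power_add mult.commute)
    finally show ?thesis using True ij by (simp add: weighted_char_mat_index)
  next
    case False
    then show ?thesis using ij A by (simp add: weighted_char_mat_index)
  qed
  finally show "mat_delete ?B n n $$ (i, j) = ?W $$ (i, j)" .
qed (simp_all add: weighted_char_mat_def)

text \<open>Multiplying row \<open>a\<close> by \<open>X ^ k n\<close> and adding row \<open>n\<close> clears column \<open>n\<close> except for the
  diagonal entry \<open>X ^ k n\<close>; what remains is the matrix of the permutation in which the step
  \<open>a \<mapsto> n \<mapsto> \<pi> n\<close> is shortcut to \<open>a \<mapsto> \<pi> n\<close>, with the weight of \<open>n\<close> moved to \<open>a\<close>.\<close>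

lemma det_weighted_char_mat_bypass:
  assumes a: "a < n" "\<pi> a = n" and only_a: "\<And>i. i < n \<Longrightarrow> i \<noteq> a \<Longrightarrow> \<pi> i \<noteq> n"
    and moved: "\<pi> n \<noteq> n"
  shows "det (weighted_char_mat (Suc n) k \<pi> :: 'a :: idom poly mat) =
    det (weighted_char_mat n (k(a := k a + k n)) (\<pi>(a := \<pi> n)))"
proof -
  let ?X = "[:0, 1:] ^ k n :: 'a poly"
  let ?A = "weighted_char_mat (Suc n) k \<pi> :: 'a poly mat"
  let ?B = "addrow 1 a n (multrow a ?X ?A)"
  have A: "?A \<in> carrier_mat (Suc n) (Suc n)" by (rule weighted_char_mat_carrier)
  have "det ?B = det (multrow a ?X ?A)" by (rule det_addrow) (use a A in auto)
  also have "\<dots> = ?X * det ?A" by (rule det_multrow) (use a A in auto)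
  also have "det ?B = ?B $$ (n, n) * det (mat_delete ?B n n)"
  proof (rule det_last_column_single)
    show "?B \<in> carrier_mat (Suc n) (Suc n)" using A by simp
    show "?B $$ (i, n) = 0" if "i < n" for i
    proof (cases "i = a")
      case True
      then show ?thesis using a not_sym[OF moved] A by (simp add: weighted_char_mat_index)
    next
      case False
      then show ?thesis using that a only_a[OF that False] A by (simp add: weighted_char_mat_index)
    qed
  qed
  also have "?B $$ (n, n) = ?X"
    using a not_sym[OF moved] A by (simp add: weighted_char_mat_index)
  finally show ?thesis using a by (simp add: mat_delete_bypass_row_op)
qed

lemma det_weighted_char_mat:
  assumes "bij_betw \<pi> {..<n} {..<n}" and "\<forall>i<n. 0 < k i"
  shows "det (weighted_char_mat n k \<pi> :: 'a :: {idom, ring_char_0} poly mat) \<noteq> 0 \<and>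
    order 1 (det (weighted_char_mat n k \<pi> :: 'a poly mat)) = closure_components n \<pi>"
  using assms
proof (induction n arbitrary: k \<pi>)
  case 0
  then show ?case
    by (simp add: weighted_char_mat_def closure_components_eq_card_quotient)
next
  case (Suc n)
  let ?X = "[:0, 1:] ^ k n :: 'a poly"
  have bij: "bij_betw \<pi> {..<Suc n} {..<Suc n}" by (fact Suc.prems(1))
  show ?case
  proof (cases "\<pi> n = n")
    case True
    have bij': "bij_betw \<pi> {..<n} {..<n}" using bij True by (rule bij_betw_lessThan_fixpoint)
    then have into: "\<forall>i<n. \<pi> i < n" by (auto dest: bij_betw_apply)
    have IH: "det (weighted_char_mat n k \<pi> :: 'a poly mat) \<noteq> 0"
      "order 1 (det (weighted_char_mat n k \<pi> :: 'a poly mat)) = closure_components n \<pi>"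
      using Suc.IH[OF bij'] Suc.prems(2) by auto
    have "0 < k n" using Suc.prems(2) by simp
    then have "?X - 1 \<noteq> 0" by (rule X_power_minus_1_neq_0)
    have det: "det (weighted_char_mat (Suc n) k \<pi>) = (?X - 1) * det (weighted_char_mat n k \<pi>)"
      by (rule det_weighted_char_mat_fixpoint) (use True into in auto)
    have nonzero: "det (weighted_char_mat (Suc n) k \<pi> :: 'a poly mat) \<noteq> 0"
      unfolding det using \<open>?X - 1 \<noteq> 0\<close> IH(1) by simp
    then have "order 1 (det (weighted_char_mat (Suc n) k \<pi> :: 'a poly mat)) =
      order 1 (?X - 1) + order 1 (det (weighted_char_mat n k \<pi> :: 'a poly mat))"
      unfolding det by (rule order_mult)
    also have "order 1 (?X - 1) = 1" using \<open>0 < k n\<close> by (rule order_1_X_power_minus_1)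
    finally show ?thesis
      using nonzero IH(2) closure_components_fixpoint[OF into True] by simp
  next
    case False
    have "n \<in> \<pi> ` {..<Suc n}" using bij by (simp add: bij_betw_def)
    then obtain a where a: "a < n" "\<pi> a = n" using False by (auto simp: less_Suc_eq)
    have only_a: "\<pi> i \<noteq> n" if "i < n" "i \<noteq> a" for i
      using a that inj_on_eq_iff[OF bij_betw_imp_inj_on[OF bij], of i a] by simp
    have "\<forall>i<n. 0 < (k(a := k a + k n)) i" using Suc.prems(2) by simp
    note IH = Suc.IH[OF bij_betw_bypass[OF bij a] this]
    have "det (weighted_char_mat (Suc n) k \<pi> :: 'a poly mat) =
      det (weighted_char_mat n (k(a := k a + k n)) (\<pi>(a := \<pi> n)))"
      by (rule det_weighted_char_mat_bypass[OF a only_a False])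
    with IH show ?thesis unfolding closure_components_bypass[OF bij a] by argo
  qed
qed

lemma order_1_char_poly_perm_mat:
  fixes A :: "'a :: {idom, ring_char_0} mat"
  assumes A: "A \<in> carrier_mat n n" and bij: "bij_betw \<pi> {..<n} {..<n}"
    and entries: "\<And>i j. i < n \<Longrightarrow> j < n \<Longrightarrow> A $$ (i, j) = (if j = \<pi> i then 1 else 0)"
  shows "order 1 (char_poly A) = closure_components n \<pi>"
proof -
  have "char_poly_matrix A = weighted_char_mat n (\<lambda>_. 1) \<pi>"
    by (rule eq_matI) (use A entries in \<open>auto simp: char_poly_matrix_def weighted_char_mat_def\<close>)
  moreover have
    "order 1 (det (weighted_char_mat n (\<lambda>_. 1) \<pi> :: 'a poly mat)) = closure_components n \<pi>"
    by (rule det_weighted_char_mat[THEN conjunct2]) (use bij in auto)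
  ultimately show ?thesis by (simp add: char_poly_def)
qed

lemma psum_Suc: "i < length xs \<Longrightarrow> psum xs (Suc i) = psum xs i + xs ! i"
  unfolding psum_def by (simp add: take_Suc_conv_app_nth)

lemma psum_mono: "i \<le> j \<Longrightarrow> psum xs i \<le> psum xs j"
  unfolding psum_def by (metis le_add_diff_inverse take_add sum_list_append le_add1)

lemma psum_length: "psum xs (length xs) = sum_list xs"
  by (simp add: psum_def)

lemma psum_block_exists: "a < psum xs r \<Longrightarrow> \<exists>i<r. psum xs i \<le> a \<and> a < psum xs (Suc i)"
proof (induction r)
  case 0
  then show ?case by (simp add: psum_def)
next
  case (Suc r)
  then show ?case by (cases "a < psum xs r") (auto intro: less_SucI)
qed

lemma psum_block_unique:
  assumes "psum xs i \<le> a" "a < psum xs (Suc i)" "psum xs j \<le> a" "a < psum xs (Suc j)"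
  shows "i = j"
proof (rule ccontr)
  assume "i \<noteq> j"
  then have "Suc i \<le> j \<or> Suc j \<le> i" by auto
  then show False using assms psum_mono[of "Suc i" j xs] psum_mono[of "Suc j" i xs] by auto
qed

lemma psum_block_the:
  assumes "i < r" "psum xs i \<le> a" "a < psum xs (Suc i)"
  shows "(THE i. i < r \<and> psum xs i \<le> a \<and> a < psum xs (Suc i)) = i"
proof (rule the_equality)
  fix j assume "j < r \<and> psum xs j \<le> a \<and> a < psum xs (Suc j)"
  then show "j = i" using assms by (meson psum_block_unique)
qed (use assms in simp)

lemma psum_splice:
  assumes "length xs = length ys"
  shows "psum (splice xs ys) (2 * i) = psum xs i + psum ys i"
    and "psum (splice xs ys) (Suc (2 * i)) = psum xs (Suc i) + psum ys i"
  using assms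
proof (induction xs ys arbitrary: i rule: list_induct2)
  case Nil
  { case 1 show ?case by (simp add: psum_def) }
  { case 2 show ?case by (simp add: psum_def) }
next
  case (Cons x xs y ys)
  { case 1 show ?case using Cons.IH(1) by (cases i) (simp_all add: psum_def) }
  { case 2 show ?case using Cons.IH(2) by (cases i) (simp_all add: psum_def) }
qed

text \<open>The bottom row of the Lorenz braid consists of the blocks \<open>p\<^sub>1, q\<^sub>1, \<dots>, p\<^sub>r, q\<^sub>r\<close>, so
  bottom block \<open>m\<close> starts at \<open>psum (splice ps qs) m\<close>. Its strands come, in order, from the top
  block starting at \<open>lorenz_top_start ps qs m\<close>: block \<open>q\<^sub>i\<close> of the left part for odd \<open>m\<close>,
  block \<open>p\<^sub>i\<close> of the right part for even \<open>m\<close>.\<close>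

definition lorenz_top_start :: "nat list \<Rightarrow> nat list \<Rightarrow> nat \<Rightarrow> nat" where
  "lorenz_top_start ps qs m =
     (if odd m then psum qs (m div 2) else psum qs (length ps) + psum ps (m div 2))"

context
  fixes ps qs :: "nat list"
  assumes same_length: "length qs = length ps"
begin

lemma lorenz_bottom_start:
  "psum (splice ps qs) (2 * i) = psum ps i + psum qs i"
  "psum (splice ps qs) (Suc (2 * i)) = psum ps (Suc i) + psum qs i"
  "psum (splice ps qs) (Suc (Suc (2 * i))) = psum ps (Suc i) + psum qs (Suc i)"
  using psum_splice[of ps qs] psum_splice(1)[of ps qs "Suc i"] same_length by simp_all

lemma lorenz_strands_eq: "lorenz_strands ps qs = psum (splice ps qs) (2 * length ps)"
  using same_length psum_length[of ps] psum_length[of qs]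
  by (simp add: lorenz_strands_def lorenz_bottom_start)

lemma lorenz_end_top_start:
  assumes m: "m < 2 * length ps"
    and k: "psum (splice ps qs) m + k < psum (splice ps qs) (Suc m)"
  shows "lorenz_end ps qs (lorenz_top_start ps qs m + k) = psum (splice ps qs) m + k"
proof (cases "odd m")
  case True
  then obtain i where i: "m = Suc (2 * i)" by (auto elim: oddE)
  then have "i < length ps" using m by simp
  have block: "psum qs i + k < psum qs (Suc i)" using k by (simp add: i lorenz_bottom_start)
  also have "\<dots> \<le> psum qs (length ps)" using \<open>i < length ps\<close> by (simp add: psum_mono)
  finally have "psum qs i + k < psum qs (length ps)" .
  moreover have
    "(THE j. j < length ps \<and> psum qs j \<le> psum qs i + k \<and> psum qs i + k < psum qs (Suc j)) = i"
    using \<open>i < length ps\<close> block by (intro psum_block_the) auto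
  ultimately show ?thesis
    by (simp add: lorenz_end_def lorenz_top_start_def i lorenz_bottom_start)
next
  case False
  then obtain i where i: "m = 2 * i" by (auto elim: evenE)
  then have "i < length ps" using m by simp
  have block: "psum ps i + k < psum ps (Suc i)" using k by (simp add: i lorenz_bottom_start)
  have "(THE j. j < length ps \<and> psum ps j \<le> psum ps i + k \<and> psum ps i + k < psum ps (Suc j)) = i"
    using \<open>i < length ps\<close> block by (intro psum_block_the) auto
  then show ?thesis
    by (simp add: lorenz_end_def lorenz_top_start_def i lorenz_bottom_start)
qed

lemma lorenz_strand_block:
  assumes "a < lorenz_strands ps qs"
  obtains m k where "m < 2 * length ps"
    and "psum (splice ps qs) m + k < psum (splice ps qs) (Suc m)"
    and "a = lorenz_top_start ps qs m + k"
proof (cases "a < psum qs (length ps)")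
  case True
  then obtain i where "i < length ps" "psum qs i \<le> a" "a < psum qs (Suc i)"
    using psum_block_exists by blast
  then show thesis
    by (intro that[of "Suc (2 * i)" "a - psum qs i"])
      (auto simp: lorenz_top_start_def lorenz_bottom_start)
next
  case False
  have "a - psum qs (length ps) < psum ps (length ps)"
    using assms False same_length psum_length[of ps] psum_length[of qs]
    by (simp add: lorenz_strands_def)
  then obtain i where "i < length ps" "psum ps i \<le> a - psum qs (length ps)"
      "a - psum qs (length ps) < psum ps (Suc i)"
    using psum_block_exists by blast
  then show thesis using False
    by (intro that[of "2 * i" "a - psum qs (length ps) - psum ps i"])
      (auto simp: lorenz_top_start_def lorenz_bottom_start)
qed

lemma bij_betw_lorenz_end:
  "bij_betw (lorenz_end ps qs) {..<lorenz_strands ps qs} {..<lorenz_strands ps qs}"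
proof -
  let ?n = "lorenz_strands ps qs" and ?B = "psum (splice ps qs)"
  have into: "lorenz_end ps qs a < ?n" if strand: "a < ?n" for a
  proof -
    obtain m k where m: "m < 2 * length ps" and k: "?B m + k < ?B (Suc m)"
      and a: "a = lorenz_top_start ps qs m + k"
      using lorenz_strand_block[OF strand] .
    have "lorenz_end ps qs a < ?B (Suc m)" using lorenz_end_top_start[OF m k] a k by simp
    also have "\<dots> \<le> ?n" using m by (simp add: lorenz_strands_eq psum_mono)
    finally show ?thesis .
  qed
  have "inj_on (lorenz_end ps qs) {..<?n}"
  proof (rule inj_onI)
    fix a a' assume "a \<in> {..<?n}" "a' \<in> {..<?n}" and eq: "lorenz_end ps qs a = lorenz_end ps qs a'"
    then obtain m k m' k' where m: "m < 2 * length ps" "?B m + k < ?B (Suc m)"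
        "a = lorenz_top_start ps qs m + k"
      and m': "m' < 2 * length ps" "?B m' + k' < ?B (Suc m')" "a' = lorenz_top_start ps qs m' + k'"
      using lorenz_strand_block by (metis lessThan_iff)
    have same_end: "?B m + k = ?B m' + k'"
      using eq lorenz_end_top_start[OF m(1,2)] lorenz_end_top_start[OF m'(1,2)] m(3) m'(3) by simp
    then have "m = m'"
      using m(2) m'(2) by (intro psum_block_unique[of "splice ps qs" m "?B m + k"]) auto
    then show "a = a'" using same_end m(3) m'(3) by simp
  qed
  with into show ?thesis
    by (simp add: bij_betw_def endo_inj_surj image_subset_iff)
qed

lemma lorenz_M_condition_iff_block:
  "(\<exists>i<length ps. \<exists>k.
      (k < qs ! i \<and> a = psum qs i + k \<and> b = psum ps (Suc i) + psum qs i + k)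
    \<or> (k < ps ! i \<and> a = psum qs (length ps) + psum ps i + k \<and> b = psum ps i + psum qs i + k))
   \<longleftrightarrow> (\<exists>m<2 * length ps. \<exists>k. psum (splice ps qs) m + k < psum (splice ps qs) (Suc m)
         \<and> a = lorenz_top_start ps qs m + k \<and> b = psum (splice ps qs) m + k)"
  (is "?C \<longleftrightarrow> ?blocks")
proof
  have sizes: "psum ps (Suc i) = psum ps i + ps ! i" "psum qs (Suc i) = psum qs i + qs ! i"
    if "i < length ps" for i
    using that same_length by (simp_all add: psum_Suc)
  show ?blocks if ?C
  proof -
    from \<open>?C\<close> obtain i k where i: "i < length ps"
      and "(k < qs ! i \<and> a = psum qs i + k \<and> b = psum ps (Suc i) + psum qs i + k)
        \<or> (k < ps ! i \<and> a = psum qs (length ps) + psum ps i + k \<and> b = psum ps i + psum qs i + k)"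
      by blast
    then show ?blocks
    proof (elim disjE conjE)
      assume "k < qs ! i" "a = psum qs i + k" "b = psum ps (Suc i) + psum qs i + k"
      then show ?blocks using i sizes[OF i]
        by (intro exI[of _ "Suc (2 * i)"]) (auto simp: lorenz_top_start_def lorenz_bottom_start)
    next
      assume "k < ps ! i" "a = psum qs (length ps) + psum ps i + k" "b = psum ps i + psum qs i + k"
      then show ?blocks using i sizes[OF i]
        by (intro exI[of _ "2 * i"]) (auto simp: lorenz_top_start_def lorenz_bottom_start)
    qed
  qed
  show ?C if ?blocks
  proof -
    from \<open>?blocks\<close> obtain m k where m: "m < 2 * length ps"
      "psum (splice ps qs) m + k < psum (splice ps qs) (Suc m)"
      "a = lorenz_top_start ps qs m + k" "b = psum (splice ps qs) m + k" by blast
    show ?C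
    proof (cases "odd m")
      case True
      then obtain i where "m = Suc (2 * i)" by (auto elim: oddE)
      then show ?C using m sizes[of i] by (intro exI[of _ i] conjI exI[of _ k])
          (auto simp: lorenz_top_start_def lorenz_bottom_start)
    next
      case False
      then obtain i where "m = 2 * i" by (auto elim: evenE)
      then show ?C using m sizes[of i] by (intro exI[of _ i] conjI exI[of _ k])
          (auto simp: lorenz_top_start_def lorenz_bottom_start)
    qed
  qed
qed

lemma lorenz_M_index:
  assumes a: "a < lorenz_strands ps qs" and b: "b < lorenz_strands ps qs"
  shows "lorenz_M ps qs $$ (a, b) = (if b = lorenz_end ps qs a then 1 else 0)"
proof -
  have "(\<exists>m<2 * length ps. \<exists>k. psum (splice ps qs) m + k < psum (splice ps qs) (Suc m)
         \<and> a = lorenz_top_start ps qs m + k \<and> b = psum (splice ps qs) m + k)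
    \<longleftrightarrow> b = lorenz_end ps qs a"
    using lorenz_end_top_start lorenz_strand_block[OF a] by metis
  then show ?thesis using a b by (simp add: lorenz_M_def Let_def lorenz_M_condition_iff_block)
qed

end

theorem corollary6p11:
  fixes ps qs :: "nat list"
  assumes "lorenz_params_ok ps qs"
  shows "lorenz_link_components ps qs = order 1 (char_poly (lorenz_M ps qs))"
proof -
  have same_length: "length qs = length ps"
    using assms by (simp add: lorenz_params_ok_def)
  have "lorenz_M ps qs \<in> carrier_mat (lorenz_strands ps qs) (lorenz_strands ps qs)"
    by (simp add: lorenz_M_def Let_def)
  from order_1_char_poly_perm_mat[OF this bij_betw_lorenz_end[OF same_length]]
  show ?thesis
    by (simp add: lorenz_link_components_def lorenz_M_index[OF same_length])
qed

end
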